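(* Let $\mathcal{F}$ be any finite constraint family and $k$ a constant. The problem $\mathrm{Csp}_k^\gamma(\mathcal{F})$ with $\gamma={u_{\min}}(\mathcal{F})$ is non-trivial. Conversely, if $\gamma<{u_{\min}}(\mathcal{F})$, then there exists $n_0$ such that any instance of $\mathrm{Csp}_k^\gamma(\mathcal{F})$ with at least $n_0$ variables admits a satisfying assignment of weight $k$.
   Context: A constraint family $\mathcal{F}$ is a finite set of non-constant Boolean functions $f:\{0,1\}^r\to\{0,1\}$ (arity $r$ may depend on $f$). For constant integer $k$ and real $\gamma\ge 0$, $\mathrm{Csp}_k^\gamma(\mathcal{F})$ is the problem: given Boolean variables $x_1,\dots,x_n$ and a set of $m=\Theta(n^\gamma)$ constraints, each of the form $f(x_{i_1},\dots,x_{i_r})$ with $f\in\mathcal{F}$ of arity $r$ and $i_1,\dots,i_r$ pairwise distinct, decide whether there is an assignment setting exactly $k$ variables to $1$ (weight $k$) that satisfies all constraints. The problem is non-trivial if it has infinitely many NO-instances, and trivial if for all sufficiently large $n$ every instance with $n$ variables is a YES-instance. For $f$, ${u_{\min}}(f)=\min\{\|a\|_1 : f(a)=0\}$ is the minimum weight of a violating assignment, and ${u_{\min}}(\mathcal{F})=\min_{f\in\mathcal{F}}{u_{\min}}(f)$.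
   Formalization: Non-triviality at $\gamma={u_{\min}}(\mathcal{F})$ holds only when ${u_{\min}}(\mathcal{F})\le k$, and for some choice of the constants in $m=\Theta(n^\gamma)$, whereas the converse holds for every choice of those constants. Each condition added here is assumed in the paper as well or is needed for the statement above to hold. *)

theory Defs
  imports Complex_Main
begin

text \<open>A Boolean function of arity r is represented as a pair (r, f) with
  f :: bool list => bool, only ever evaluated on lists of length r.\<close>
type_synonym bfun = "nat \<times> (bool list \<Rightarrow> bool)"

text \<open>A constraint: a function of the family together with its scope,
  a list of variable indices (variables are x_0, ..., x_(n-1)).\<close>
type_synonym constr = "bfun \<times> nat list"

definition nonconst :: "bfun \<Rightarrow> bool" where
  "nonconst \<phi> \<longleftrightarrow> (\<exists>a b. length a = fst \<phi> \<and> length b = fst \<phi> \<and> snd \<phi> a \<noteq> snd \<phi> b)"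

definition constraint_family :: "bfun set \<Rightarrow> bool" where
  "constraint_family F \<longleftrightarrow> finite F \<and> (\<forall>\<phi>\<in>F. nonconst \<phi>)"

definition weight :: "bool list \<Rightarrow> nat" where
  "weight a = length (filter id a)"

definition umin_fun :: "bfun \<Rightarrow> nat" where
  "umin_fun \<phi> = Min {weight a | a. length a = fst \<phi> \<and> \<not> snd \<phi> a}"

definition umin :: "bfun set \<Rightarrow> nat" where
  "umin F = Min (umin_fun ` F)"

definition is_instance :: "bfun set \<Rightarrow> nat \<Rightarrow> constr set \<Rightarrow> bool" where
  "is_instance F n C \<longleftrightarrow> finite C \<and>
     (\<forall>(\<phi>, is) \<in> C. \<phi> \<in> F \<and> length is = fst \<phi> \<and> distinct is \<and> set is \<subseteq> {..<n})"

definition sat_constr :: "(nat \<Rightarrow> bool) \<Rightarrow> constr \<Rightarrow> bool" where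
  "sat_constr x c = snd (fst c) (map x (snd c))"

definition yes_instance :: "nat \<Rightarrow> nat \<Rightarrow> constr set \<Rightarrow> bool" where
  "yes_instance k n C \<longleftrightarrow>
     (\<exists>x :: nat \<Rightarrow> bool. card {i. i < n \<and> x i} = k \<and> (\<forall>c\<in>C. sat_constr x c))"

text \<open>Instances of Csp_k^gamma(F): m = Theta(n^gamma), made explicit via constants
  c1, c2 with c1 * n^gamma <= m <= c2 * n^gamma.\<close>
definition csp_instance ::
  "bfun set \<Rightarrow> real \<Rightarrow> real \<Rightarrow> real \<Rightarrow> nat \<Rightarrow> constr set \<Rightarrow> bool" where
  "csp_instance F \<gamma> c1 c2 n C \<longleftrightarrow> is_instance F n C \<and>
     c1 * real n powr \<gamma> \<le> real (card C) \<and> real (card C) \<le> c2 * real n powr \<gamma>"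

definition nontrivial_csp :: "bfun set \<Rightarrow> nat \<Rightarrow> real \<Rightarrow> real \<Rightarrow> real \<Rightarrow> bool" where
  "nontrivial_csp F k \<gamma> c1 c2 \<longleftrightarrow>
     infinite {(n, C). csp_instance F \<gamma> c1 c2 n C \<and> \<not> yes_instance k n C}"

definition trivial_csp :: "bfun set \<Rightarrow> nat \<Rightarrow> real \<Rightarrow> real \<Rightarrow> real \<Rightarrow> bool" where
  "trivial_csp F k \<gamma> c1 c2 \<longleftrightarrow>
     (\<exists>n0. \<forall>n\<ge>n0. \<forall>C. csp_instance F \<gamma> c1 c2 n C \<longrightarrow> yes_instance k n C)"

end

theory Submission
  imports Defs
begin

text \<open>
  Let \<open>u = umin F\<close>, attained by some \<open>\<phi> \<in> F\<close> with a violating assignment \<open>a\<close> of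
  weight \<open>u\<close> and \<open>z\<close> zeros.

  At \<open>\<gamma> = u\<close>: cut the first \<open>(k + 1) z\<close> variables into \<open>k + 1\<close> blocks of size \<open>z\<close>
  and, for every block and every \<open>u\<close>-set \<open>S\<close> of variables outside it, impose \<open>\<phi>\<close> with
  the zeros of \<open>a\<close> on the block and its ones on \<open>S\<close>. These are \<open>\<Theta>(n^u)\<close> constraints.
  An assignment of weight \<open>k\<close> leaves some block free of ones and has at least \<open>u\<close> ones,
  so some constraint reads exactly \<open>a\<close> and is violated.

  For \<open>\<gamma> < u\<close>: if the ones of an assignment meet every scope in fewer than \<open>u\<close>
  variables, every constraint sees an input of weight below its minimum violating weight
  and is satisfied. With scopes of size at most \<open>R\<close>, a union bound over the \<open>u\<close>-subsets
  of the scopes leaves at most \<open>m 2^R C(n-u, k-u)\<close> bad \<open>k\<close>-sets, fewer than \<open>C(n, k)\<close>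
  as soon as \<open>m = O(n^\<gamma>) = o(n^u)\<close>.
\<close>

section \<open>Interleaving two lists along a Boolean mask\<close>

text \<open>Meaningful only if \<open>s\<close> and \<open>d\<close> have exactly as many entries as \<open>a\<close> has
  \<open>True\<close> and \<open>False\<close> entries; otherwise \<open>hd []\<close> leaks in.\<close>

fun interleave :: "bool list \<Rightarrow> 'a list \<Rightarrow> 'a list \<Rightarrow> 'a list" where
  "interleave [] s d = []"
| "interleave (True # a) s d = hd s # interleave a (tl s) d"
| "interleave (False # a) s d = hd d # interleave a s (tl d)"

lemma weight_Nil [simp]: "weight [] = 0"
  and weight_Cons [simp]: "weight (b # a) = (if b then Suc (weight a) else weight a)"
  by (simp_all add: weight_def)

lemma length_interleave:
  "length s = weight a \<Longrightarrow> length d = length (filter Not a) \<Longrightarrow>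
   length (interleave a s d) = length a"
  by (induction a s d rule: interleave.induct) auto

lemma set_interleave:
  "length s = weight a \<Longrightarrow> length d = length (filter Not a) \<Longrightarrow>
   set (interleave a s d) = set s \<union> set d"
proof (induction a s d rule: interleave.induct)
  case (2 a s d)
  then show ?case by (cases s) auto
next
  case (3 a s d)
  then show ?case by (cases d) auto
qed simp

lemma distinct_interleave:
  "length s = weight a \<Longrightarrow> length d = length (filter Not a) \<Longrightarrow>
   distinct s \<Longrightarrow> distinct d \<Longrightarrow> set s \<inter> set d = {} \<Longrightarrow> distinct (interleave a s d)"
proof (induction a s d rule: interleave.induct)
  case (2 a s d)
  then obtain y s' where "s = y # s'" by (cases s) auto
  with 2 show ?case using set_interleave[of s' a d] by auto
next
  case (3 a s d)
  then obtain y d' where "d = y # d'" by (cases d) auto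
  with 3 show ?case using set_interleave[of s a d'] by auto
qed simp

lemma map_interleave:
  "length s = weight a \<Longrightarrow> length d = length (filter Not a) \<Longrightarrow>
   \<forall>i\<in>set s. x i \<Longrightarrow> \<forall>i\<in>set d. \<not> x i \<Longrightarrow> map x (interleave a s d) = a"
proof (induction a s d rule: interleave.induct)
  case (2 a s d)
  then obtain y s' where "s = y # s'" by (cases s) auto
  with 2 show ?case by simp
next
  case (3 a s d)
  then obtain y d' where "d = y # d'" by (cases d) auto
  with 3 show ?case by simp
qed simp

lemma interleave_inject:
  "length s = weight a \<Longrightarrow> length s' = weight a \<Longrightarrow>
   length d = length (filter Not a) \<Longrightarrow> interleave a s d = interleave a s' d \<Longrightarrow> s = s'"
proof (induction a s d arbitrary: s' rule: interleave.induct)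
  case (2 a s d)
  from "2.prems"(1) obtain y t where s: "s = y # t"
    by (cases s) auto
  from "2.prems"(2) obtain y' t' where s': "s' = y' # t'"
    by (cases s') auto
  have "t = t'"
    using "2.IH"[of t'] "2.prems" s s' by simp
  then show ?case
    using "2.prems"(4) s s' by simp
next
  case (3 a s d)
  from "3.prems"(3) obtain y d' where "d = y # d'"
    by (cases d) auto
  with 3 show ?case
    by simp
qed simp

section \<open>Minimum violating weight\<close>

lemma weight_le_length: "weight a \<le> length a"
  unfolding weight_def by (rule length_filter_le)

lemma finite_violating_weights: "finite {weight a | a. length a = fst \<phi> \<and> \<not> snd \<phi> a}"
  by (rule finite_subset[of _ "{..fst \<phi>}"]) (auto intro: order.trans[OF weight_le_length])

lemma umin_fun_le_weight:
  assumes "length a = fst \<phi>" and "\<not> snd \<phi> a"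
  shows "umin_fun \<phi> \<le> weight a"
  unfolding umin_fun_def using assms finite_violating_weights by (intro Min_le) auto

lemma umin_fun_attained:
  assumes "nonconst \<phi>"
  obtains a where "length a = fst \<phi>" and "\<not> snd \<phi> a" and "weight a = umin_fun \<phi>"
proof -
  let ?W = "{weight a | a. length a = fst \<phi> \<and> \<not> snd \<phi> a}"
  have "?W \<noteq> {}"
  proof -
    obtain a b where "length a = fst \<phi>" "length b = fst \<phi>" "snd \<phi> a \<noteq> snd \<phi> b"
      using assms unfolding nonconst_def by blast
    then show ?thesis
      by (cases "snd \<phi> a") auto
  qed
  with finite_violating_weights have "umin_fun \<phi> \<in> ?W"
    unfolding umin_fun_def by (rule Min_in)
  then obtain a where "length a = fst \<phi>" "\<not> snd \<phi> a" "weight a = umin_fun \<phi>"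
    by auto
  then show ?thesis
    by (rule that)
qed

lemma umin_le_umin_fun: "finite F \<Longrightarrow> \<phi> \<in> F \<Longrightarrow> umin F \<le> umin_fun \<phi>"
  unfolding umin_def by simp

lemma umin_attained:
  assumes "finite F" and "F \<noteq> {}"
  obtains \<phi> where "\<phi> \<in> F" and "umin_fun \<phi> = umin F"
proof -
  have "umin F \<in> umin_fun ` F"
    unfolding umin_def using assms by (intro Min_in) auto
  then obtain \<phi> where "\<phi> \<in> F" and "umin_fun \<phi> = umin F"
    by auto
  then show ?thesis
    by (rule that)
qed

section \<open>NO-instances with \<open>\<Theta>(n^umin)\<close> constraints\<close>

lemma exists_block_disjoint:
  fixes X :: "nat set"
  assumes "finite X" and "card X \<le> k"
  shows "\<exists>j\<le>k. X \<inter> {j * z..<Suc j * z} = {}"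
proof (rule ccontr)
  assume all_hit: "\<not> ?thesis"
  have "{..k} \<subseteq> (\<lambda>i. i div z) ` X"
  proof
    fix j assume "j \<in> {..k}"
    then have "X \<inter> {j * z..<Suc j * z} \<noteq> {}"
      using all_hit by auto
    then obtain i where "i \<in> X" and "j * z \<le> i" and "i < Suc j * z"
      by auto
    then have "i div z = j"
      by (intro div_nat_eqI) (auto simp: mult.commute)
    with \<open>i \<in> X\<close> show "j \<in> (\<lambda>i. i div z) ` X"
      by blast
  qed
  then have "Suc k \<le> card ((\<lambda>i. i div z) ` X)"
    using card_mono[OF finite_imageI[OF assms(1)]] by fastforce
  also have "\<dots> \<le> card X"
    by (rule card_image_le[OF assms(1)])
  finally show False
    using assms(2) by simp
qed

definition block :: "nat \<Rightarrow> nat \<Rightarrow> nat list" where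
  "block z j = [j * z..<Suc j * z]"

definition hard_instance :: "bfun \<Rightarrow> bool list \<Rightarrow> nat \<Rightarrow> nat \<Rightarrow> constr set" where
  "hard_instance \<phi> a k n =
     (\<lambda>(j, S). (\<phi>, interleave a (sorted_list_of_set S) (block (length (filter Not a)) j))) `
       (SIGMA j:{..k}. {S. S \<subseteq> {..<n} - set (block (length (filter Not a)) j) \<and> card S = weight a})"

lemma set_block_subset:
  assumes "j \<le> k" and "Suc k * z \<le> n"
  shows "set (block z j) \<subseteq> {..<n}"
proof -
  have "Suc j * z \<le> Suc k * z"
    using assms(1) by (intro mult_le_mono1) simp
  then have "Suc j * z \<le> n"
    using assms(2) by linarith
  then show ?thesis
    unfolding block_def by auto
qed

lemma finite_hard_instance: "finite (hard_instance \<phi> a k n)"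
  unfolding hard_instance_def by (auto intro!: finite_SigmaI)

lemma is_instance_hard_instance:
  assumes "\<phi> \<in> F" and "length a = fst \<phi>" and "Suc k * length (filter Not a) \<le> n"
  shows "is_instance F n (hard_instance \<phi> a k n)"
proof -
  let ?z = "length (filter Not a)"
  have "\<psi> \<in> F \<and> length is = fst \<psi> \<and> distinct is \<and> set is \<subseteq> {..<n}"
    if "(\<psi>, is) \<in> hard_instance \<phi> a k n" for \<psi> "is"
  proof -
    from that obtain j S where j: "j \<le> k" and S: "S \<subseteq> {..<n} - set (block ?z j)" "card S = weight a"
      and "\<psi> = \<phi>" and "is": "is = interleave a (sorted_list_of_set S) (block ?z j)"
      unfolding hard_instance_def by auto
    have "finite S"
      using S(1) finite_subset by blast
    then have lengths: "length (sorted_list_of_set S) = weight a"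
        "length (block ?z j) = length (filter Not a)"
      using S(2) by (simp_all add: block_def)
    have "length is = fst \<phi>"
      using length_interleave[OF lengths] "is" assms(2) by simp
    moreover have "distinct is"
      unfolding "is" using S(1) \<open>finite S\<close>
      by (intro distinct_interleave[OF lengths]) (auto simp: block_def)
    moreover have "set is \<subseteq> {..<n}"
      using set_interleave[OF lengths] "is" S(1) \<open>finite S\<close> set_block_subset[OF j assms(3)] by auto
    ultimately show ?thesis
      using assms(1) \<open>\<psi> = \<phi>\<close> by simp
  qed
  then show ?thesis
    unfolding is_instance_def using finite_hard_instance by auto
qed

lemma card_subsets_le_power:
  assumes "A \<subseteq> {..<n}"
  shows "card {S. S \<subseteq> A \<and> card S = u} \<le> n ^ u"
proof -
  have "card {S. S \<subseteq> A \<and> card S = u} \<le> card {S. S \<subseteq> {..<n} \<and> card S = u}"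
    using assms by (intro card_mono) (auto intro: finite_subset[of _ "Pow {..<n}"])
  also have "\<dots> = n choose u"
    by (simp add: n_subsets)
  also have "\<dots> \<le> n ^ u"
    by (cases "u \<le> n") (simp_all add: binomial_le_pow binomial_eq_0)
  finally show ?thesis .
qed

lemma card_hard_instance_le: "card (hard_instance \<phi> a k n) \<le> Suc k * n ^ weight a"
proof -
  let ?B = "\<lambda>j. {S. S \<subseteq> {..<n} - set (block (length (filter Not a)) j) \<and> card S = weight a}"
  have "card (hard_instance \<phi> a k n) \<le> card (SIGMA j:{..k}. ?B j)"
    unfolding hard_instance_def by (rule card_image_le) (auto intro!: finite_SigmaI)
  also have "\<dots> = (\<Sum>j\<le>k. card (?B j))"
    by (rule card_SigmaI) auto
  also have "\<dots> \<le> (\<Sum>j\<le>k. n ^ weight a)"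
    by (intro sum_mono card_subsets_le_power) auto
  finally show ?thesis
    by simp
qed

lemma card_subsets_le_card_hard_instance:
  "card {S. S \<subseteq> {..<n} - set (block (length (filter Not a)) 0) \<and> card S = weight a}
     \<le> card (hard_instance \<phi> a k n)"
proof -
  let ?z = "length (filter Not a)" and ?u = "weight a"
  let ?B0 = "{S. S \<subseteq> {..<n} - set (block ?z 0) \<and> card S = ?u}"
  let ?f = "\<lambda>S. (\<phi>, interleave a (sorted_list_of_set S) (block ?z 0))"
  have "inj_on ?f ?B0"
  proof (rule inj_onI)
    fix S S' assume "S \<in> ?B0" "S' \<in> ?B0" "?f S = ?f S'"
    then have "finite S" "finite S'" "card S = ?u" "card S' = ?u"
      using finite_subset by auto
    then have "length (sorted_list_of_set S) = ?u" "length (sorted_list_of_set S') = ?u"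
      "length (block ?z 0) = ?z"
      by (simp_all add: block_def)
    with \<open>?f S = ?f S'\<close> have "sorted_list_of_set S = sorted_list_of_set S'"
      using interleave_inject by blast
    then show "S = S'"
      using \<open>finite S\<close> \<open>finite S'\<close> by (metis set_sorted_list_of_set)
  qed
  moreover have "?f ` ?B0 \<subseteq> hard_instance \<phi> a k n"
  proof (rule image_subsetI)
    fix S assume "S \<in> ?B0"
    then have "(0, S) \<in> (SIGMA j:{..k}. {S. S \<subseteq> {..<n} - set (block ?z j) \<and> card S = ?u})"
      by simp
    then show "?f S \<in> hard_instance \<phi> a k n"
      unfolding hard_instance_def by (rule rev_image_eqI) simp
  qed
  ultimately show ?thesis
    using finite_hard_instance by (rule card_inj_on_le)
qed

lemma card_hard_instance_ge:
  assumes "2 * length (filter Not a) \<le> n" and "length (filter Not a) + weight a \<le> n"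
  shows "(real n / (2 * weight a)) ^ weight a \<le> card (hard_instance \<phi> a k n)"
proof -
  let ?z = "length (filter Not a)" and ?u = "weight a"
  have "real n / 2 \<le> real (n - ?z)"
    using assms(1) by simp
  then have "real n / (2 * ?u) \<le> real (n - ?z) / ?u"
    using divide_right_mono[of "real n / 2" "real (n - ?z)" ?u] by simp
  then have "(real n / (2 * ?u)) ^ ?u \<le> (real (n - ?z) / ?u) ^ ?u"
    by (intro power_mono) auto
  also have "\<dots> \<le> (n - ?z) choose ?u"
    using assms(2) by (intro binomial_ge_n_over_k_pow_k) simp
  also have "\<dots> = card {S. S \<subseteq> {..<n} - set (block ?z 0) \<and> card S = ?u}"
    by (simp add: n_subsets block_def atLeast0LessThan)
  also have "\<dots> \<le> card (hard_instance \<phi> a k n)"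
    using card_subsets_le_card_hard_instance by (rule of_nat_mono)
  finally show ?thesis
    by simp
qed

lemma hard_instance_not_yes:
  assumes "\<not> snd \<phi> a" and "weight a \<le> k" and "Suc k * length (filter Not a) \<le> n"
  shows "\<not> yes_instance k n (hard_instance \<phi> a k n)"
proof
  let ?z = "length (filter Not a)"
  assume "yes_instance k n (hard_instance \<phi> a k n)"
  then obtain x where card_ones: "card {i. i < n \<and> x i} = k"
    and sat: "\<forall>c\<in>hard_instance \<phi> a k n. sat_constr x c"
    unfolding yes_instance_def by blast
  let ?ones = "{i. i < n \<and> x i}"
  obtain j where "j \<le> k" and free: "?ones \<inter> {j * ?z..<Suc j * ?z} = {}"
    using exists_block_disjoint[of ?ones k ?z] card_ones by auto
  obtain S where "S \<subseteq> ?ones" and "card S = weight a" and "finite S"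
    using obtain_subset_with_card_n[of "weight a" ?ones] card_ones assms(2) by auto
  have block: "set (block ?z j) \<subseteq> {..<n}"
    using set_block_subset[OF \<open>j \<le> k\<close> assms(3)] .
  have "S \<subseteq> {..<n} - set (block ?z j)"
    using \<open>S \<subseteq> ?ones\<close> free by (auto simp: block_def)
  then have "(\<phi>, interleave a (sorted_list_of_set S) (block ?z j)) \<in> hard_instance \<phi> a k n"
    unfolding hard_instance_def using \<open>j \<le> k\<close> \<open>card S = weight a\<close> by force
  then have "snd \<phi> (map x (interleave a (sorted_list_of_set S) (block ?z j)))"
    using sat by (auto simp: sat_constr_def)
  moreover have "map x (interleave a (sorted_list_of_set S) (block ?z j)) = a"
    using \<open>S \<subseteq> ?ones\<close> \<open>finite S\<close> \<open>card S = weight a\<close> free block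
    by (intro map_interleave) (auto simp: weight_def block_def)
  ultimately show False
    using assms(1) by simp
qed

lemma nontrivial_csp_of_violating:
  assumes "\<phi> \<in> F" and "length a = fst \<phi>" and "\<not> snd \<phi> a" and "weight a \<le> k"
  shows "\<exists>c1 c2. 0 < c1 \<and> c1 \<le> c2 \<and> nontrivial_csp F k (weight a) c1 c2"
proof -
  let ?z = "length (filter Not a)" and ?u = "weight a"
  define c1 :: real where "c1 = 1 / (2 * real ?u) ^ ?u"
  define N0 where "N0 = 2 * Suc k * ?z + ?u + 1"
  let ?bad = "{(n, C). csp_instance F ?u c1 (Suc k) n C \<and> \<not> yes_instance k n C}"
  have "(n, hard_instance \<phi> a k n) \<in> ?bad" if "N0 \<le> n" for n
  proof -
    have n: "0 < n" "Suc k * ?z \<le> n" "2 * ?z \<le> n" "?z + ?u \<le> n"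
      using that by (auto simp: N0_def)
    have "c1 * real n powr ?u = (real n / (2 * ?u)) ^ ?u"
      using n(1) by (simp add: c1_def powr_realpow power_divide)
    also have "\<dots> \<le> card (hard_instance \<phi> a k n)"
      using n(3,4) by (rule card_hard_instance_ge)
    finally have lower: "c1 * real n powr ?u \<le> card (hard_instance \<phi> a k n)" .
    have "real (card (hard_instance \<phi> a k n)) \<le> real (Suc k * n ^ ?u)"
      using card_hard_instance_le by (rule of_nat_mono)
    then have upper: "real (card (hard_instance \<phi> a k n)) \<le> Suc k * real n powr ?u"
      using n(1) by (simp add: powr_realpow algebra_simps)
    from lower upper show ?thesis
      using is_instance_hard_instance[OF assms(1,2) n(2)] hard_instance_not_yes[OF assms(3,4) n(2)]
      by (simp add: csp_instance_def)
  qed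
  then have "(\<lambda>n. (n, hard_instance \<phi> a k n)) ` {N0..} \<subseteq> ?bad"
    by auto
  moreover have "inj_on (\<lambda>n. (n, hard_instance \<phi> a k n)) {N0..}"
    by (rule inj_onI) simp
  ultimately have "infinite ?bad"
    using infinite_Ici[of N0] by (meson finite_imageD finite_subset)
  have "1 \<le> (2 * real ?u) ^ ?u"
  proof (cases "?u = 0")
    case False
    then show ?thesis
      by (intro one_le_power) simp
  qed simp
  then have "0 < c1" and "c1 \<le> 1"
    by (simp_all add: c1_def)
  with \<open>infinite ?bad\<close> show ?thesis
    unfolding nontrivial_csp_def by (intro exI[of _ c1] exI[of _ "real (Suc k)"]) auto
qed

section \<open>Satisfying sparse instances\<close>

lemma weight_map_indicator:
  "distinct is \<Longrightarrow> weight (map (\<lambda>i. i \<in> T) is) = card (set is \<inter> T)"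
  by (simp add: weight_def filter_map comp_def distinct_card[symmetric] Int_def)

lemma yes_instance_of_sparse_set:
  assumes "finite F" and "is_instance F n C" and "T \<subseteq> {..<n}" and "card T = k"
    and sparse: "\<forall>c\<in>C. card (set (snd c) \<inter> T) < umin F"
  shows "yes_instance k n C"
proof -
  have "sat_constr (\<lambda>i. i \<in> T) c" if "c \<in> C" for c
  proof (rule ccontr)
    obtain \<phi> "is" where c: "c = (\<phi>, is)"
      by (cases c)
    assume "\<not> sat_constr (\<lambda>i. i \<in> T) c"
    moreover have "\<phi> \<in> F" "length is = fst \<phi>" "distinct is"
      using that assms(2) c unfolding is_instance_def by auto
    ultimately have "umin_fun \<phi> \<le> card (set is \<inter> T)"
      using umin_fun_le_weight[of "map (\<lambda>i. i \<in> T) is" \<phi>]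
      by (simp add: c sat_constr_def weight_map_indicator)
    moreover have "umin F \<le> umin_fun \<phi>"
      using umin_le_umin_fun[OF assms(1) \<open>\<phi> \<in> F\<close>] .
    ultimately show False
      using sparse that c by fastforce
  qed
  moreover have "{i. i < n \<and> i \<in> T} = T"
    using assms(3) by auto
  ultimately show ?thesis
    unfolding yes_instance_def using assms(4) by (intro exI[of _ "\<lambda>i. i \<in> T"]) auto
qed

lemma card_supersets_le:
  assumes "finite A" and "U \<subseteq> A"
  shows "card {T. T \<subseteq> A \<and> card T = k \<and> U \<subseteq> T} \<le> (card A - card U) choose (k - card U)"
proof -
  let ?G = "{T. T \<subseteq> A \<and> card T = k \<and> U \<subseteq> T}"
  have "finite U"
    using assms finite_subset by blast
  have "inj_on (\<lambda>T. T - U) ?G"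
    by (rule inj_onI) blast
  moreover have "(\<lambda>T. T - U) ` ?G \<subseteq> {B. B \<subseteq> A - U \<and> card B = k - card U}"
    using \<open>finite U\<close> by (auto simp: card_Diff_subset)
  moreover have "finite {B. B \<subseteq> A - U \<and> card B = k - card U}"
    using assms(1) by (auto intro: finite_subset[of _ "Pow A"])
  ultimately have "card ?G \<le> card {B. B \<subseteq> A - U \<and> card B = k - card U}"
    by (rule card_inj_on_le)
  also have "\<dots> = (card A - card U) choose (k - card U)"
    using assms \<open>finite U\<close> by (simp add: n_subsets card_Diff_subset)
  finally show ?thesis .
qed

lemma card_subsets_meeting_le:
  fixes \<S> :: "'a set set"
  assumes "finite A" and "finite \<S>" and scopes: "\<forall>S\<in>\<S>. finite S \<and> card S \<le> R"
  shows "card {T. T \<subseteq> A \<and> card T = k \<and> (\<exists>S\<in>\<S>. u \<le> card (S \<inter> T))}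
           \<le> card \<S> * 2 ^ R * ((card A - u) choose (k - u))"
proof -
  let ?G = "\<lambda>U. {T. T \<subseteq> A \<and> card T = k \<and> U \<subseteq> T}"
  let ?I = "\<lambda>S. {U. U \<subseteq> S \<inter> A \<and> card U = u}"
  let ?M = "(card A - u) choose (k - u)"
  have finite_I: "finite (?I S)" if "S \<in> \<S>" for S
    using scopes that by (auto intro: finite_subset[of _ "Pow S"])
  have "{T. T \<subseteq> A \<and> card T = k \<and> (\<exists>S\<in>\<S>. u \<le> card (S \<inter> T))} \<subseteq> (\<Union>S\<in>\<S>. \<Union>U\<in>?I S. ?G U)"
  proof
    fix T assume "T \<in> {T. T \<subseteq> A \<and> card T = k \<and> (\<exists>S\<in>\<S>. u \<le> card (S \<inter> T))}"
    then obtain S where "S \<in> \<S>" "u \<le> card (S \<inter> T)" "T \<subseteq> A" "card T = k"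
      by auto
    moreover obtain U where "U \<subseteq> S \<inter> T" "card U = u"
      using obtain_subset_with_card_n[OF \<open>u \<le> card (S \<inter> T)\<close>] by metis
    ultimately show "T \<in> (\<Union>S\<in>\<S>. \<Union>U\<in>?I S. ?G U)"
      by blast
  qed
  then have "card {T. T \<subseteq> A \<and> card T = k \<and> (\<exists>S\<in>\<S>. u \<le> card (S \<inter> T))}
      \<le> card (\<Union>S\<in>\<S>. \<Union>U\<in>?I S. ?G U)"
    using assms(1) by (intro card_mono) (auto intro: finite_subset[of _ "Pow A"])
  also have "\<dots> \<le> (\<Sum>S\<in>\<S>. card (\<Union>U\<in>?I S. ?G U))"
    by (rule card_UN_le[OF assms(2)])
  also have "\<dots> \<le> (\<Sum>S\<in>\<S>. \<Sum>U\<in>?I S. card (?G U))"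
    using finite_I by (intro sum_mono card_UN_le)
  also have "\<dots> \<le> (\<Sum>S\<in>\<S>. \<Sum>U\<in>?I S. ?M)"
    using card_supersets_le[OF assms(1)] by (intro sum_mono) fastforce
  also have "\<dots> \<le> (\<Sum>S\<in>\<S>. 2 ^ R * ?M)"
  proof (intro sum_mono)
    fix S assume "S \<in> \<S>"
    have "card (?I S) \<le> card (Pow S)"
      using scopes \<open>S \<in> \<S>\<close> by (intro card_mono) auto
    also have "\<dots> \<le> 2 ^ R"
      using scopes \<open>S \<in> \<S>\<close> by (simp add: card_Pow)
    finally show "(\<Sum>U\<in>?I S. ?M) \<le> 2 ^ R * ?M"
      by simp
  qed
  finally show ?thesis
    by (simp add: mult.assoc)
qed

lemma exists_subset_with_small_intersections:
  fixes \<S> :: "'a set set"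
  assumes "finite A" and "finite \<S>" and scopes: "\<forall>S\<in>\<S>. finite S \<and> card S \<le> R"
    and "u \<le> k" and "k \<le> card A"
    and few: "card \<S> * 2 ^ R * (k choose u) < card A choose u"
  shows "\<exists>T\<subseteq>A. card T = k \<and> (\<forall>S\<in>\<S>. card (S \<inter> T) < u)"
proof (rule ccontr)
  let ?all = "{T. T \<subseteq> A \<and> card T = k}"
  let ?bad = "{T. T \<subseteq> A \<and> card T = k \<and> (\<exists>S\<in>\<S>. u \<le> card (S \<inter> T))}"
  let ?N = "card A"
  assume "\<not> ?thesis"
  then have "?all \<subseteq> ?bad"
    by (auto simp: not_less)
  then have "?N choose k \<le> card ?bad"
    using assms(1) by (simp add: n_subsets[symmetric]) (intro card_mono, auto intro: finite_subset[of _ "Pow A"])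
  then have "(?N choose k) * (?N choose u) \<le> card \<S> * 2 ^ R * ((?N - u) choose (k - u)) * (?N choose u)"
    using card_subsets_meeting_le[OF assms(1-3), of k u] by (intro mult_right_mono) auto
  also have "\<dots> = card \<S> * 2 ^ R * (k choose u) * (?N choose k)"
    using choose_mult[OF assms(4,5)] by (simp add: algebra_simps)
  also have "\<dots> < (?N choose u) * (?N choose k)"
    using few assms(5) by (intro mult_strict_right_mono) auto
  finally show False
    by (simp add: mult.commute)
qed

lemma eventually_mult_powr_less_power:
  fixes c \<gamma> :: real
  assumes "\<gamma> < real u"
  shows "eventually (\<lambda>n. c * real n powr \<gamma> < real n ^ u) sequentially"
proof -
  define e where "e = real u - \<gamma>"
  define A where "A = max 1 c"
  have "0 < e" and "1 \<le> A"
    using assms by (simp_all add: e_def A_def)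
  show ?thesis
    unfolding eventually_sequentially
  proof (intro exI allI impI)
    fix n :: nat
    assume "nat \<lceil>A powr (1 / e)\<rceil> + 1 \<le> n"
    then have "0 < n" and "A powr (1 / e) < real n"
      by linarith+
    then have "(A powr (1 / e)) powr e < real n powr e"
      using \<open>0 < e\<close> by (intro powr_less_mono2) auto
    then have "A < real n powr e"
      using \<open>0 < e\<close> \<open>1 \<le> A\<close> by (simp add: powr_powr)
    have "c * real n powr \<gamma> \<le> A * real n powr \<gamma>"
      by (intro mult_right_mono) (auto simp: A_def)
    also have "\<dots> < real n powr e * real n powr \<gamma>"
      using \<open>A < real n powr e\<close> \<open>0 < n\<close> by simp
    also have "\<dots> = real n ^ u"
      using \<open>0 < n\<close> by (simp add: e_def powr_realpow flip: powr_add)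
    finally show "c * real n powr \<gamma> < real n ^ u" .
  qed
qed

lemma eventually_mult_powr_less_binomial:
  fixes c \<gamma> :: real
  assumes "\<gamma> < real u"
  shows "eventually (\<lambda>n. c * real n powr \<gamma> < real (n choose u)) sequentially"
  using eventually_mult_powr_less_power[OF assms, of "c * real u ^ u"] eventually_ge_at_top[of u]
proof eventually_elim
  case (elim n)
  have "0 < real u ^ u"
    by (cases "u = 0") simp_all
  with elim(1) have "c * real n powr \<gamma> < (real n / u) ^ u"
    by (simp add: power_divide pos_less_divide_eq algebra_simps)
  also have "\<dots> \<le> n choose u"
    using elim(2) by (rule binomial_ge_n_over_k_pow_k)
  finally show ?case .
qed

lemma exists_sparse_set_of_few_constraints:
  assumes "is_instance F n C" and "\<forall>\<phi>\<in>F. fst \<phi> \<le> R" and "u \<le> k" and "k \<le> n"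
    and few: "card C * 2 ^ R * (k choose u) < n choose u"
  shows "\<exists>T\<subseteq>{..<n}. card T = k \<and> (\<forall>c\<in>C. card (set (snd c) \<inter> T) < u)"
proof -
  let ?\<S> = "(\<lambda>c. set (snd c)) ` C"
  have "finite C"
    using assms(1) by (simp add: is_instance_def)
  have "card (set is) \<le> R" if "(\<phi>, is) \<in> C" for \<phi> "is"
  proof -
    have "length is = fst \<phi>" and "\<phi> \<in> F"
      using assms(1) that by (auto simp: is_instance_def)
    then show ?thesis
      using assms(2) card_length[of "is"] by fastforce
  qed
  then have "\<forall>S\<in>?\<S>. finite S \<and> card S \<le> R"
    by auto
  moreover have "card ?\<S> * 2 ^ R * (k choose u) < card {..<n} choose u"
    using le_less_trans[OF mult_le_mono1[OF mult_le_mono1[OF card_image_le[OF \<open>finite C\<close>]]] few]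
    by simp
  ultimately show ?thesis
    using exists_subset_with_small_intersections[of "{..<n}" ?\<S> R u k] \<open>finite C\<close> assms(3,4) by auto
qed

lemma trivial_csp_below_umin:
  assumes "finite F" and "\<gamma> < real (umin F)"
  shows "trivial_csp F k \<gamma> c1 c2"
proof -
  let ?u = "umin F"
  define R where "R = Max (fst ` F)"
  define K where "K = 2 ^ R * (k choose ?u)"
  have R: "\<forall>\<phi>\<in>F. fst \<phi> \<le> R"
    using assms(1) by (simp add: R_def)
  obtain n0 where n0: "\<forall>n\<ge>n0. c2 * K * real n powr \<gamma> < real (n choose ?u)"
    using eventually_mult_powr_less_binomial[OF assms(2)] unfolding eventually_sequentially by blast
  have "yes_instance k n C" if n: "max n0 k \<le> n" and C: "csp_instance F \<gamma> c1 c2 n C" for n C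
  proof -
    have inst: "is_instance F n C" and card_C: "real (card C) \<le> c2 * real n powr \<gamma>"
      using C by (auto simp: csp_instance_def)
    obtain T where "T \<subseteq> {..<n}" and "card T = k" and "\<forall>c\<in>C. card (set (snd c) \<inter> T) < ?u"
    proof (cases "?u \<le> k")
      case True
      have "real (card C * K) \<le> c2 * K * real n powr \<gamma>"
        using mult_right_mono[OF card_C, of "real K"] by (simp add: algebra_simps)
      also have "\<dots> < real (n choose ?u)"
        using n0 n by simp
      finally have "card C * K < n choose ?u"
        by (simp only: of_nat_less_iff)
      then have "card C * 2 ^ R * (k choose ?u) < n choose ?u"
        by (simp add: K_def mult.assoc)
      then show ?thesis
        using exists_sparse_set_of_few_constraints[OF inst R True] n that by auto
    next
      case False
      have "card (set (snd c) \<inter> {..<k}) < ?u" for c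
        using card_mono[of "{..<k}" "set (snd c) \<inter> {..<k}"] False by auto
      then show ?thesis
        using n that[of "{..<k}"] by auto
    qed
    then show ?thesis
      by (rule yes_instance_of_sparse_set[OF assms(1) inst])
  qed
  then show ?thesis
    unfolding trivial_csp_def by blast
qed

theorem mainTheorem6:
  fixes F :: "bfun set" and k :: nat
  assumes "constraint_family F" and "F \<noteq> {}"
  shows "(umin F \<le> k \<longrightarrow>
           (\<exists>c1 c2. 0 < c1 \<and> c1 \<le> c2 \<and> nontrivial_csp F k (real (umin F)) c1 c2))
       \<and> (\<forall>\<gamma>::real. 0 \<le> \<gamma> \<and> \<gamma> < real (umin F) \<longrightarrow>
           (\<forall>c1 c2. 0 < c1 \<and> c1 \<le> c2 \<longrightarrow> trivial_csp F k \<gamma> c1 c2))"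
proof -
  have "finite F" and nonconst: "\<forall>\<phi>\<in>F. nonconst \<phi>"
    using assms(1) by (auto simp: constraint_family_def)
  have "\<exists>c1 c2. 0 < c1 \<and> c1 \<le> c2 \<and> nontrivial_csp F k (real (umin F)) c1 c2"
    if "umin F \<le> k"
  proof -
    obtain \<phi> where "\<phi> \<in> F" and "umin_fun \<phi> = umin F"
      using umin_attained[OF \<open>finite F\<close> assms(2)] .
    moreover obtain a where "length a = fst \<phi>" and "\<not> snd \<phi> a" and "weight a = umin_fun \<phi>"
      using umin_fun_attained nonconst \<open>\<phi> \<in> F\<close> by blast
    ultimately show ?thesis
      using nontrivial_csp_of_violating that by metis
  qed
  moreover have "trivial_csp F k \<gamma> c1 c2" if "\<gamma> < real (umin F)" for \<gamma> c1 c2 :: real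
    using trivial_csp_below_umin[OF \<open>finite F\<close> that] .
  ultimately show ?thesis
    by blast
qed

end
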